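(* Let $|\psi\rangle,|\phi\rangle,|e\rangle,|f\rangle$ be unit vectors in $\mathbb{C}^2$ and let $$\tau=\frac12\left((|\psi\rangle\langle\psi|)^T\otimes|e\rangle\langle e|+(|\phi\rangle\langle\phi|)^T\otimes|f\rangle\langle f|\right).$$ Then the singular values of $N(\tau)$ are $$|\langle\psi|\phi\rangle||\langle e|f\rangle|,\quad\sqrt{(1-|\langle\psi|\phi\rangle|^2)(1-|\langle e|f\rangle|^2)},\quad 0.$$
   Context: $^T$ denotes transpose with respect to the computational basis $\{|0\rangle,|1\rangle\}$. The correlation matrix of an operator $X$ on $\mathbb{C}^2\otimes\mathbb{C}^2$ is the real $3\times3$ matrix $N(X)_{ij}=\operatorname{tr}[X(\sigma_i\otimes\sigma_j)]$, $i,j\in\{1,2,3\}$, with $\sigma_i$ the Pauli matrices. *)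

theory Defs
  imports "Jordan_Normal_Form.Char_Poly" "HOL-Computational_Algebra.Polynomial"
begin

text \<open>Conventions: vectors of \<open>\<complex>\<^sup>2\<close> are JNF vectors of dimension 2, operators are JNF matrices;
  indices start at 0 (computational basis \<open>|0\<rangle>,|1\<rangle>\<close>).\<close>

definition bra_ket :: "complex vec \<Rightarrow> complex vec \<Rightarrow> complex" where
  "bra_ket u v = (\<Sum>i<dim_vec v. cnj (u $ i) * v $ i)"

definition unit_vec2 :: "complex vec \<Rightarrow> bool" where
  "unit_vec2 v \<longleftrightarrow> dim_vec v = 2 \<and> bra_ket v v = 1"

definition ket_bra :: "complex vec \<Rightarrow> complex vec \<Rightarrow> complex mat" where
  "ket_bra u v = mat (dim_vec u) (dim_vec v) (\<lambda>(i,j). u $ i * cnj (v $ j))"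

definition tensor_mat :: "complex mat \<Rightarrow> complex mat \<Rightarrow> complex mat" where
  "tensor_mat A B = mat (dim_row A * dim_row B) (dim_col A * dim_col B)
     (\<lambda>(i,j). A $$ (i div dim_row B, j div dim_col B) * B $$ (i mod dim_row B, j mod dim_col B))"

definition mat_trace :: "complex mat \<Rightarrow> complex" where
  "mat_trace A = (\<Sum>i<dim_row A. A $$ (i,i))"

definition pauli :: "nat \<Rightarrow> complex mat" where
  "pauli k = (if k = 1 then mat_of_rows_list 2 [[0, 1], [1, 0]]
     else if k = 2 then mat_of_rows_list 2 [[0, -\<i>], [\<i>, 0]]
     else mat_of_rows_list 2 [[1, 0], [0, -1]])"

text \<open>Correlation matrix \<open>N(X)_{ij} = tr[X(\<sigma>_i \<otimes> \<sigma>_j)]\<close>, \<open>i,j \<in> {1,2,3}\<close> (stored at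
  0-based positions \<open>i-1, j-1\<close>). The entries are real for Hermitian \<open>X\<close>; we take real parts.\<close>
definition corr_mat :: "complex mat \<Rightarrow> real mat" where
  "corr_mat X = mat 3 3 (\<lambda>(i,j). Re (mat_trace (X * tensor_mat (pauli (i+1)) (pauli (j+1)))))"

definition singular_values :: "real mat \<Rightarrow> real multiset" where
  "singular_values M = image_mset sqrt (proots (char_poly (transpose_mat M * M)))"

end

theory Submission
  imports Defs
begin

text \<open>For a pure state \<open>|u\<rangle>\<langle>u|\<close> the expectation values \<open>\<langle>u|\<sigma>\<^sub>k|u\<rangle>\<close> are real; they
  form the Bloch vector \<open>r(u)\<close>, and \<open>r(u) \<cdot> r(v) = 2|\<langle>u|v\<rangle>|\<^sup>2 - 1\<close> for unit vectors.
  Transposing \<open>|\<psi>\<rangle>\<langle>\<psi>|\<close> conjugates \<open>\<psi>\<close>, which preserves \<open>|\<langle>\<psi>|\<phi>\<rangle>|\<close>. Since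
  \<open>tr((A \<otimes> B)(C \<otimes> D)) = tr(AC) tr(BD)\<close>, the correlation matrix is the rank-two matrix
  \<open>N(\<tau>) = (a b\<^sup>T + c d\<^sup>T)/2\<close>, where \<open>a, c\<close> are the Bloch vectors of \<open>\<psi>\<^sup>*, \<phi>\<^sup>*\<close> and
  \<open>b, d\<close> those of \<open>e, f\<close>. The Gram matrix \<open>N\<^sup>T N\<close> is singular, and with
  \<open>P = |\<langle>\<psi>|\<phi>\<rangle>|\<^sup>2\<close>, \<open>Q = |\<langle>e|f\<rangle>|\<^sup>2\<close>, \<open>x = a \<cdot> c = 2P - 1\<close>, \<open>y = b \<cdot> d = 2Q - 1\<close> its
  characteristic polynomial is \<open>t\<^sup>3 - (1 + x y)/2 t\<^sup>2 + (1 - x\<^sup>2)(1 - y\<^sup>2)/16 t\<close>, which is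
  \<open>t (t - P Q) (t - (1 - P)(1 - Q))\<close>.\<close>

lemma sum_lessThan_2:
  fixes g :: "nat \<Rightarrow> 'a :: comm_monoid_add"
  shows "(\<Sum>i<2. g i) = g 0 + g 1"
  by (simp add: eval_nat_numeral)

lemma sum_lessThan_3:
  fixes g :: "nat \<Rightarrow> 'a :: comm_monoid_add"
  shows "(\<Sum>i<3. g i) = g 0 + g 1 + g 2"
  by (simp add: eval_nat_numeral)

lemma sum_lessThan_mult_nat:
  fixes g :: "nat \<Rightarrow> 'a :: comm_monoid_add"
  shows "(\<Sum>p<n * m. g p) = (\<Sum>i<n. \<Sum>j<m. g (i * m + j))"
proof -
  have "sum g {i * m..<i * m + m} = (\<Sum>j<m. g (i * m + j))" for i
    using sum.shift_bounds_nat_ivl[of g 0 "i * m" m] by (simp add: atLeast0LessThan add.commute)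
  then show ?thesis
    by (simp add: sum.nat_group[symmetric])
qed

lemma mat_trace_tensor_mat_mult:
  assumes "A \<in> carrier_mat n k" "C \<in> carrier_mat k n" "B \<in> carrier_mat m l" "D \<in> carrier_mat l m"
  shows "mat_trace (tensor_mat A B * tensor_mat C D) = mat_trace (A * C) * mat_trace (B * D)"
proof -
  have "mat_trace (tensor_mat A B * tensor_mat C D)
      = (\<Sum>p<n * m. \<Sum>q<k * l. A $$ (p div m, q div l) * B $$ (p mod m, q mod l)
           * (C $$ (q div l, p div m) * D $$ (q mod l, p mod m)))"
    using assms by (simp add: mat_trace_def tensor_mat_def scalar_prod_def atLeast0LessThan
        less_mult_imp_div_less)
  also have "\<dots> = (\<Sum>i<n. \<Sum>j<m. \<Sum>r<k. \<Sum>s<l. A $$ (i, r) * B $$ (j, s) * (C $$ (r, i) * D $$ (s, j)))"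
    by (simp add: sum_lessThan_mult_nat)
  also have "\<dots> = (\<Sum>i<n. \<Sum>r<k. \<Sum>j<m. \<Sum>s<l. A $$ (i, r) * C $$ (r, i) * (B $$ (j, s) * D $$ (s, j)))"
    by (rule sum.cong[OF refl], subst sum.swap) (simp add: mult_ac)
  also have "\<dots> = (\<Sum>i<n. \<Sum>r<k. A $$ (i, r) * C $$ (r, i)) * (\<Sum>j<m. \<Sum>s<l. B $$ (j, s) * D $$ (s, j))"
    by (simp only: sum_distrib_right, simp only: sum_distrib_left)
  also have "\<dots> = mat_trace (A * C) * mat_trace (B * D)"
    using assms by (simp add: mat_trace_def scalar_prod_def atLeast0LessThan)
  finally show ?thesis .
qed

lemma tensor_mat_carrier:
  "A \<in> carrier_mat n k \<Longrightarrow> B \<in> carrier_mat m l \<Longrightarrow> tensor_mat A B \<in> carrier_mat (n * m) (k * l)"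
  by (simp add: tensor_mat_def)

lemma ket_bra_carrier: "ket_bra u v \<in> carrier_mat (dim_vec u) (dim_vec v)"
  by (simp add: ket_bra_def)

lemma pauli_carrier: "pauli k \<in> carrier_mat 2 2"
  by (rule carrier_matI) (simp_all add: pauli_def mat_of_rows_list_def)

lemma tensor_mat_pauli_carrier: "tensor_mat (pauli k) (pauli l) \<in> carrier_mat 4 4"
  using tensor_mat_carrier[OF pauli_carrier pauli_carrier] by simp

lemma mat_trace_add:
  "A \<in> carrier_mat n n \<Longrightarrow> B \<in> carrier_mat n n \<Longrightarrow> mat_trace (A + B) = mat_trace A + mat_trace B"
  by (simp add: mat_trace_def sum.distrib)

lemma mat_trace_smult: "A \<in> carrier_mat n n \<Longrightarrow> mat_trace (c \<cdot>\<^sub>m A) = c * mat_trace A"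
  by (simp add: mat_trace_def sum_distrib_left)

lemma transpose_ket_bra: "transpose_mat (ket_bra u v) = ket_bra (conjugate v) (conjugate u)"
  by (auto simp: ket_bra_def)

lemma bra_ket_conjugate:
  "dim_vec u = dim_vec v \<Longrightarrow> bra_ket (conjugate u) (conjugate v) = cnj (bra_ket u v)"
  by (simp add: bra_ket_def)

lemma mat_trace_ket_bra_mult:
  assumes "A \<in> carrier_mat n n" "dim_vec u = n" "dim_vec v = n"
  shows "mat_trace (ket_bra u v * A) = bra_ket v (A *\<^sub>v u)"
proof -
  have "mat_trace (ket_bra u v * A) = (\<Sum>i<n. \<Sum>k<n. u $ i * cnj (v $ k) * A $$ (k, i))"
    using assms by (simp add: mat_trace_def ket_bra_def scalar_prod_def atLeast0LessThan)
  also have "\<dots> = (\<Sum>k<n. cnj (v $ k) * (\<Sum>i<n. A $$ (k, i) * u $ i))"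
    by (subst sum.swap) (simp add: sum_distrib_left mult_ac)
  also have "\<dots> = bra_ket v (A *\<^sub>v u)"
    using assms by (simp add: bra_ket_def scalar_prod_def atLeast0LessThan)
  finally show ?thesis .
qed

definition bloch_vec :: "complex vec \<Rightarrow> real vec" where
  "bloch_vec u = vec 3 (\<lambda>k. Re (bra_ket u (pauli (k + 1) *\<^sub>v u)))"

lemma dim_bloch_vec [simp]: "dim_vec (bloch_vec u) = 3"
  by (simp add: bloch_vec_def)

lemma bloch_vec_carrier [simp]: "bloch_vec u \<in> carrier_vec 3"
  by (simp add: carrier_vecI)

lemma bra_ket_pauli:
  assumes "dim_vec u = 2"
  shows "bra_ket u (pauli 1 *\<^sub>v u) = cnj (u $ 0) * u $ 1 + cnj (u $ 1) * u $ 0"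
    and "bra_ket u (pauli 2 *\<^sub>v u) = \<i> * (cnj (u $ 1) * u $ 0 - cnj (u $ 0) * u $ 1)"
    and "bra_ket u (pauli 3 *\<^sub>v u) = cnj (u $ 0) * u $ 0 - cnj (u $ 1) * u $ 1"
  using assms
  by (simp_all add: bra_ket_def pauli_def mat_of_rows_list_def mult_mat_vec_def scalar_prod_def
      eval_nat_numeral algebra_simps)

lemma bra_ket_pauli_real:
  assumes "dim_vec u = 2"
  shows "Im (bra_ket u (pauli k *\<^sub>v u)) = 0"
proof -
  consider "k = 1" | "k = 2" | "pauli k = pauli 3"
    by (cases "k = 1 \<or> k = 2") (auto simp: pauli_def)
  then show ?thesis
    by cases (simp_all add: bra_ket_pauli[OF assms] algebra_simps del: One_nat_def)
qed

lemma bloch_vec_nth: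
  assumes "dim_vec u = 2"
  shows "bloch_vec u $ 0 = 2 * Re (cnj (u $ 0) * u $ 1)"
    and "bloch_vec u $ 1 = 2 * Im (cnj (u $ 0) * u $ 1)"
    and "bloch_vec u $ 2 = (cmod (u $ 0))\<^sup>2 - (cmod (u $ 1))\<^sup>2"
  unfolding cmod_power2
  by (simp_all add: bloch_vec_def bra_ket_pauli[OF assms] power2_eq_square algebra_simps
      del: One_nat_def)

lemma bloch_vec_inner:
  assumes "dim_vec u = 2" "dim_vec v = 2"
  shows "bloch_vec u \<bullet> bloch_vec v
    = 2 * (cmod (bra_ket u v))\<^sup>2 - Re (bra_ket u u) * Re (bra_ket v v)"
  using assms
  by (simp add: scalar_prod_def atLeast0LessThan sum_lessThan_3 sum_lessThan_2 bloch_vec_nth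
      bra_ket_def cmod_power2 del: One_nat_def) (simp add: power2_eq_square algebra_simps)

lemma unit_vec2_conjugate: "unit_vec2 u \<Longrightarrow> unit_vec2 (conjugate u)"
  by (simp add: unit_vec2_def bra_ket_conjugate)

lemma bloch_vec_inner_unit:
  assumes "unit_vec2 u" "unit_vec2 v"
  shows "bloch_vec u \<bullet> bloch_vec v = 2 * (cmod (bra_ket u v))\<^sup>2 - 1"
  using assms by (simp add: unit_vec2_def bloch_vec_inner)

lemma bloch_vec_norm_unit: "unit_vec2 u \<Longrightarrow> bloch_vec u \<bullet> bloch_vec u = 1"
  using bloch_vec_inner_unit[of u u] by (simp add: unit_vec2_def)

lemma bloch_vec_conjugate_inner_unit:
  assumes "unit_vec2 u" "unit_vec2 v"
  shows "bloch_vec (conjugate u) \<bullet> bloch_vec (conjugate v) = 2 * (cmod (bra_ket u v))\<^sup>2 - 1"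
  using assms bloch_vec_inner_unit[OF unit_vec2_conjugate unit_vec2_conjugate, of u v]
  by (simp add: unit_vec2_def bra_ket_conjugate)

definition outer_prod :: "'a :: times vec \<Rightarrow> 'a vec \<Rightarrow> 'a mat" where
  "outer_prod a b = mat (dim_vec a) (dim_vec b) (\<lambda>(i, j). a $ i * b $ j)"

lemma corr_mat_tensor_ket_bra:
  assumes "dim_vec u = 2" "dim_vec v = 2"
  shows "corr_mat (tensor_mat (ket_bra u u) (ket_bra v v)) = outer_prod (bloch_vec u) (bloch_vec v)"
proof (rule eq_matI)
  fix i j
  assume "i < dim_row (outer_prod (bloch_vec u) (bloch_vec v))"
    "j < dim_col (outer_prod (bloch_vec u) (bloch_vec v))"
  then have "i < 3" "j < 3"
    by (simp_all add: outer_prod_def)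
  have "mat_trace (tensor_mat (ket_bra u u) (ket_bra v v) * tensor_mat (pauli (i + 1)) (pauli (j + 1)))
      = bra_ket u (pauli (i + 1) *\<^sub>v u) * bra_ket v (pauli (j + 1) *\<^sub>v v)"
    using assms ket_bra_carrier[of u u] ket_bra_carrier[of v v]
    by (simp add: mat_trace_tensor_mat_mult[of _ 2 2] pauli_carrier mat_trace_ket_bra_mult[OF pauli_carrier])
  then show "corr_mat (tensor_mat (ket_bra u u) (ket_bra v v)) $$ (i, j)
      = outer_prod (bloch_vec u) (bloch_vec v) $$ (i, j)"
    using \<open>i < 3\<close> \<open>j < 3\<close>
    by (simp add: corr_mat_def outer_prod_def bloch_vec_def bra_ket_pauli_real assms)
qed (simp_all add: corr_mat_def outer_prod_def)

lemma corr_mat_add: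
  assumes "X \<in> carrier_mat 4 4" "Y \<in> carrier_mat 4 4"
  shows "corr_mat (X + Y) = corr_mat X + corr_mat Y"
proof -
  have "mat_trace ((X + Y) * P) = mat_trace (X * P) + mat_trace (Y * P)" if "P \<in> carrier_mat 4 4" for P
    using assms that by (simp add: add_mult_distrib_mat[of _ 4 4] mat_trace_add[of _ 4])
  then show ?thesis
    by (intro eq_matI) (simp_all add: corr_mat_def tensor_mat_pauli_carrier)
qed

lemma corr_mat_smult:
  assumes "X \<in> carrier_mat 4 4"
  shows "corr_mat (complex_of_real r \<cdot>\<^sub>m X) = r \<cdot>\<^sub>m corr_mat X"
proof -
  have "mat_trace ((complex_of_real r \<cdot>\<^sub>m X) * P) = r * mat_trace (X * P)" if "P \<in> carrier_mat 4 4" for P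
    using assms that by (simp add: mult_smult_assoc_mat[of _ 4 4] mat_trace_smult[of _ 4])
  then show ?thesis
    by (intro eq_matI) (simp_all add: corr_mat_def tensor_mat_pauli_carrier)
qed

lemma corr_mat_equal_mixture:
  assumes "dim_vec \<psi> = 2" "dim_vec \<phi> = 2" "dim_vec e = 2" "dim_vec f = 2"
  shows "corr_mat ((1/2 :: complex) \<cdot>\<^sub>m
      (tensor_mat (transpose_mat (ket_bra \<psi> \<psi>)) (ket_bra e e)
       + tensor_mat (transpose_mat (ket_bra \<phi> \<phi>)) (ket_bra f f)))
    = outer_prod ((1/2) \<cdot>\<^sub>v bloch_vec (conjugate \<psi>)) (bloch_vec e)
      + outer_prod ((1/2) \<cdot>\<^sub>v bloch_vec (conjugate \<phi>)) (bloch_vec f)"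
    (is "corr_mat ?\<tau> = _")
proof -
  define T where "T u v = tensor_mat (ket_bra (conjugate u) (conjugate u)) (ket_bra v v)" for u v
  have carrier: "T u v \<in> carrier_mat 4 4" if "dim_vec u = 2" "dim_vec v = 2" for u v
    using that by (simp add: T_def tensor_mat_def ket_bra_def)
  have "corr_mat ?\<tau> = corr_mat (complex_of_real (1/2) \<cdot>\<^sub>m (T \<psi> e + T \<phi> f))"
    by (simp add: T_def transpose_ket_bra)
  also have "\<dots> = (1/2) \<cdot>\<^sub>m (corr_mat (T \<psi> e) + corr_mat (T \<phi> f))"
    using assms by (simp only: corr_mat_smult add_carrier_mat carrier corr_mat_add)
  also have "\<dots> = (1/2) \<cdot>\<^sub>m (outer_prod (bloch_vec (conjugate \<psi>)) (bloch_vec e)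
      + outer_prod (bloch_vec (conjugate \<phi>)) (bloch_vec f))"
    using assms by (simp add: T_def corr_mat_tensor_ket_bra)
  also have "\<dots> = outer_prod ((1/2) \<cdot>\<^sub>v bloch_vec (conjugate \<psi>)) (bloch_vec e)
      + outer_prod ((1/2) \<cdot>\<^sub>v bloch_vec (conjugate \<phi>)) (bloch_vec f)"
    by (auto simp: outer_prod_def)
  finally show ?thesis .
qed

lemma det_mat_2_expand:
  assumes "(A :: 'a :: comm_ring_1 mat) \<in> carrier_mat 2 2"
  shows "det A = A $$ (0,0) * A $$ (1,1) - A $$ (0,1) * A $$ (1,0)"
proof -
  have "det A = (\<Sum>j<2. A $$ (0,j) * cofactor A 0 j)"
    by (rule laplace_expansion_row[OF assms]) simp
  also have "\<dots> = A $$ (0,0) * A $$ (1,1) - A $$ (0,1) * A $$ (1,0)"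
    using assms unfolding sum_lessThan_2 cofactor_def
    by (subst (1 2) det_single) (auto simp: mat_delete_def)
  finally show ?thesis .
qed

lemma det_mat_3_expand:
  assumes "(A :: 'a :: comm_ring_1 mat) \<in> carrier_mat 3 3"
  shows "det A = A $$ (0,0) * (A $$ (1,1) * A $$ (2,2) - A $$ (1,2) * A $$ (2,1))
     - A $$ (0,1) * (A $$ (1,0) * A $$ (2,2) - A $$ (1,2) * A $$ (2,0))
     + A $$ (0,2) * (A $$ (1,0) * A $$ (2,1) - A $$ (1,1) * A $$ (2,0))"
proof -
  have "det A = (\<Sum>j<3. A $$ (0,j) * cofactor A 0 j)"
    by (rule laplace_expansion_row[OF assms]) simp
  also have "\<dots> = A $$ (0,0) * (A $$ (1,1) * A $$ (2,2) - A $$ (1,2) * A $$ (2,1))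
     - A $$ (0,1) * (A $$ (1,0) * A $$ (2,2) - A $$ (1,2) * A $$ (2,0))
     + A $$ (0,2) * (A $$ (1,0) * A $$ (2,1) - A $$ (1,1) * A $$ (2,0))"
    using assms unfolding sum_lessThan_3 cofactor_def
    by (subst (1 2 3) det_mat_2_expand) (auto simp: mat_delete_def numeral_2_eq_2 algebra_simps)
  finally show ?thesis .
qed

lemma poly_char_poly_mat_3:
  assumes "(S :: 'a :: comm_ring_1 mat) \<in> carrier_mat 3 3"
  shows "poly (char_poly S) t = t ^ 3 - (S $$ (0,0) + S $$ (1,1) + S $$ (2,2)) * t\<^sup>2
    + ((S $$ (0,0) * S $$ (1,1) - S $$ (0,1) * S $$ (1,0))
      + (S $$ (0,0) * S $$ (2,2) - S $$ (0,2) * S $$ (2,0))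
      + (S $$ (1,1) * S $$ (2,2) - S $$ (1,2) * S $$ (2,1))) * t
    - det S"
  using assms unfolding char_poly_def det_mat_3_expand[OF char_poly_matrix_closed[OF assms]]
  by (simp add: det_mat_3_expand[of S] char_poly_matrix_def power2_eq_square power3_eq_cube
      algebra_simps)

lemma index_gram_outer_prod_add:
  fixes a b c d :: "'a :: comm_ring vec"
  assumes "a \<in> carrier_vec n" "c \<in> carrier_vec n" "b \<in> carrier_vec m" "d \<in> carrier_vec m"
    and "j < m" "l < m"
  shows "(transpose_mat (outer_prod a b + outer_prod c d) * (outer_prod a b + outer_prod c d)) $$ (j, l)
    = (a \<bullet> a) * b $ j * b $ l + (c \<bullet> c) * d $ j * d $ l + (a \<bullet> c) * (b $ j * d $ l + d $ j * b $ l)"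
  using assms
  by (simp add: outer_prod_def scalar_prod_def sum.distrib sum_distrib_left algebra_simps)

lemma char_poly_gram_rank_two:
  fixes a b c d :: "real vec"
  assumes "a \<in> carrier_vec n" "c \<in> carrier_vec n" "b \<in> carrier_vec 3" "d \<in> carrier_vec 3"
  defines "M \<equiv> outer_prod a b + outer_prod c d"
  shows "char_poly (transpose_mat M * M) =
    [:0, ((a \<bullet> a) * (c \<bullet> c) - (a \<bullet> c)\<^sup>2) * ((b \<bullet> b) * (d \<bullet> d) - (b \<bullet> d)\<^sup>2),
      - ((a \<bullet> a) * (b \<bullet> b) + (c \<bullet> c) * (d \<bullet> d) + 2 * (a \<bullet> c) * (b \<bullet> d)), 1:]"
proof -
  define S where "S = transpose_mat M * M"
  have "M \<in> carrier_mat n 3"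
    using assms by (auto simp: M_def outer_prod_def)
  then have S: "S \<in> carrier_mat 3 3"
    by (simp add: S_def)
  have S_entry: "S $$ (j, l) = (a \<bullet> a) * b $ j * b $ l + (c \<bullet> c) * d $ j * d $ l
      + (a \<bullet> c) * (b $ j * d $ l + d $ j * b $ l)" if "j < 3" "l < 3" for j l
    unfolding S_def M_def using index_gram_outer_prod_add[OF assms(1-4) that] .
  have bb: "b \<bullet> b = b $ 0 * b $ 0 + b $ 1 * b $ 1 + b $ 2 * b $ 2"
    and dd: "d \<bullet> d = d $ 0 * d $ 0 + d $ 1 * d $ 1 + d $ 2 * d $ 2"
    and bd: "b \<bullet> d = b $ 0 * d $ 0 + b $ 1 * d $ 1 + b $ 2 * d $ 2"
    using assms by (simp_all add: scalar_prod_def atLeast0LessThan sum_lessThan_3)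
  have trace: "S $$ (0,0) + S $$ (1,1) + S $$ (2,2)
      = (a \<bullet> a) * (b \<bullet> b) + (c \<bullet> c) * (d \<bullet> d) + 2 * (a \<bullet> c) * (b \<bullet> d)"
    by (simp add: S_entry bb dd bd algebra_simps)
  have minors: "(S $$ (0,0) * S $$ (1,1) - S $$ (0,1) * S $$ (1,0))
      + (S $$ (0,0) * S $$ (2,2) - S $$ (0,2) * S $$ (2,0))
      + (S $$ (1,1) * S $$ (2,2) - S $$ (1,2) * S $$ (2,1))
      = ((a \<bullet> a) * (c \<bullet> c) - (a \<bullet> c)\<^sup>2) * ((b \<bullet> b) * (d \<bullet> d) - (b \<bullet> d)\<^sup>2)"
    by (simp add: S_entry bb dd bd power2_eq_square algebra_simps)
  have det: "det S = 0"
    by (simp add: det_mat_3_expand[OF S] S_entry algebra_simps)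
  have "poly (char_poly S) t = poly [:0, ((a \<bullet> a) * (c \<bullet> c) - (a \<bullet> c)\<^sup>2) * ((b \<bullet> b) * (d \<bullet> d) - (b \<bullet> d)\<^sup>2),
      - ((a \<bullet> a) * (b \<bullet> b) + (c \<bullet> c) * (d \<bullet> d) + 2 * (a \<bullet> c) * (b \<bullet> d)), 1:] t" for t
    unfolding poly_char_poly_mat_3[OF S] trace minors det
    by (simp add: power2_eq_square power3_eq_cube algebra_simps)
  then show ?thesis
    unfolding S_def by (intro poly_ext)
qed

lemma proots_cubic_zero_root:
  fixes p q :: "'a :: idom"
  shows "proots [:0, p * q, - (p + q), 1:] = {#0, p, q#}"
proof -
  have factors: "[:0, p * q, - (p + q), 1:] = [:0, 1:] * [:- p, 1:] * [:- q, 1:]"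
    by (simp add: algebra_simps)
  have "proots ([:0, 1:] * [:- p, 1:] * [:- q, 1:]) = proots [:0, 1:] + proots [:- p, 1:] + proots [:- q, 1:]"
    by (subst proots_mult, simp, simp)+ (rule refl)
  then show ?thesis
    unfolding factors by (simp add: add_mset_commute)
qed

theorem proposition9:
  fixes \<psi> \<phi> e f :: "complex vec"
  assumes "unit_vec2 \<psi>" "unit_vec2 \<phi>" "unit_vec2 e" "unit_vec2 f"
  defines "\<tau> \<equiv> (1/2 :: complex) \<cdot>\<^sub>m
      (tensor_mat (transpose_mat (ket_bra \<psi> \<psi>)) (ket_bra e e)
       + tensor_mat (transpose_mat (ket_bra \<phi> \<phi>)) (ket_bra f f))"
  shows "singular_values (corr_mat \<tau>) =
    {# cmod (bra_ket \<psi> \<phi>) * cmod (bra_ket e f),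
       sqrt ((1 - (cmod (bra_ket \<psi> \<phi>))\<^sup>2) * (1 - (cmod (bra_ket e f))\<^sup>2)),
       0 #}"
proof -
  have dims: "dim_vec \<psi> = 2" "dim_vec \<phi> = 2" "dim_vec e = 2" "dim_vec f = 2"
    using assms(1-4) by (simp_all add: unit_vec2_def)
  define a where "a = (1/2) \<cdot>\<^sub>v bloch_vec (conjugate \<psi>)"
  define c where "c = (1/2) \<cdot>\<^sub>v bloch_vec (conjugate \<phi>)"
  define P where "P = (cmod (bra_ket \<psi> \<phi>))\<^sup>2"
  define Q where "Q = (cmod (bra_ket e f))\<^sup>2"
  have carriers: "a \<in> carrier_vec 3" "c \<in> carrier_vec 3"
    by (simp_all add: a_def c_def)
  have inner: "a \<bullet> a = 1/4" "c \<bullet> c = 1/4" "a \<bullet> c = (2 * P - 1) / 4"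
    "bloch_vec e \<bullet> bloch_vec e = 1" "bloch_vec f \<bullet> bloch_vec f = 1"
    "bloch_vec e \<bullet> bloch_vec f = 2 * Q - 1"
    using assms(1-4)
    by (simp_all add: a_def c_def P_def Q_def bloch_vec_norm_unit unit_vec2_conjugate
        bloch_vec_conjugate_inner_unit[OF assms(1,2)] bloch_vec_inner_unit[OF assms(3,4)])
  have corr: "corr_mat \<tau> = outer_prod a (bloch_vec e) + outer_prod c (bloch_vec f)"
    unfolding \<tau>_def a_def c_def by (rule corr_mat_equal_mixture[OF dims])
  have "char_poly (transpose_mat (corr_mat \<tau>) * corr_mat \<tau>)
      = [:0, (P * Q) * ((1 - P) * (1 - Q)), - (P * Q + (1 - P) * (1 - Q)), 1:]"
    unfolding corr char_poly_gram_rank_two[OF carriers bloch_vec_carrier bloch_vec_carrier] inner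
    by (simp add: power2_eq_square field_simps)
  then have "proots (char_poly (transpose_mat (corr_mat \<tau>) * corr_mat \<tau>))
      = {#0, P * Q, (1 - P) * (1 - Q)#}"
    by (simp only: proots_cubic_zero_root)
  then show ?thesis
    by (simp add: singular_values_def P_def Q_def real_sqrt_mult add_mset_commute)
qed

end
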